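(* Let $f:\mathbb{R}^n \to \mathbb{R}$ be strongly convex and let $C \subset \mathbb{R}^n$ be a nonempty closed convex set. (a) For all $x \in \mathbb{R}^n$, $x^* \in \partial f(x)$ and $y^* \in \partial f\big(P_C(x)\big)$ we have \[ \operatorname{dist}_f^{x^*}(x,C)^2 \le \|x^*-y^*\|_2 \cdot \operatorname{dist}(x,C). \] (b) If $f$ is differentiable with an $L$-Lipschitz-continuous gradient, then for all $x \in \mathbb{R}^n$ \[ \operatorname{dist}_f(x,C)^2 \le \tfrac{L}{2} \cdot \operatorname{dist}(x,C)^2 . \]
   Context: A convex $f:\mathbb{R}^n\to\mathbb{R}$ is $\alpha$-strongly convex ($\alpha>0$) if $f(y)\ge f(x)+\langle x^*,y-x\rangle+\frac{\alpha}{2}\|y-x\|_2^2$ for all $x,y$ and all $x^*\in\partial f(x)$; strongly convex means $\alpha$-strongly convex for some $\alpha>0$. For $x^*\in\partial f(x)$ the Bregman distance is $D_f^{x^*}(x,y)=f(y)-f(x)-\langle x^*,y-x\rangle$; for a nonempty closed convex set $C$, $\operatorname{dist}_f^{x^*}(x,C)^2:=\min_{y\in C}D_f^{x^*}(x,y)$ (the minimizer, the Bregman projection, exists and is unique). If $f$ is differentiable, the superscript $x^*=\nabla f(x)$ is dropped and one writes $\operatorname{dist}_f(x,C)$. $P_C$ denotes the orthogonal (Euclidean) projection onto $C$ and $\operatorname{dist}(x,C)$ the Euclidean distance. *)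

theory Defs
  imports "HOL-Analysis.Analysis"
begin

definition subdiff :: "('a::real_inner \<Rightarrow> real) \<Rightarrow> 'a \<Rightarrow> 'a set" where
  "subdiff f x = {s. \<forall>y. f y \<ge> f x + s \<bullet> (y - x)}"

definition strongly_convex_with :: "real \<Rightarrow> ('a::real_inner \<Rightarrow> real) \<Rightarrow> bool" where
  "strongly_convex_with \<alpha> f \<longleftrightarrow> convex_on UNIV f \<and>
     (\<forall>x y s. s \<in> subdiff f x \<longrightarrow>
        f y \<ge> f x + s \<bullet> (y - x) + \<alpha> / 2 * (norm (y - x))\<^sup>2)"

definition strongly_convex :: "('a::real_inner \<Rightarrow> real) \<Rightarrow> bool" where
  "strongly_convex f \<longleftrightarrow> (\<exists>\<alpha>>0. strongly_convex_with \<alpha> f)"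

definition bregman :: "('a::real_inner \<Rightarrow> real) \<Rightarrow> 'a \<Rightarrow> 'a \<Rightarrow> 'a \<Rightarrow> real" where
  "bregman f xs x y = f y - f x - xs \<bullet> (y - x)"

text \<open>Squared Bregman distance to a set: dist_f^{xs}(x,C)^2 = min over y in C of D_f^{xs}(x,y)
  (written as an infimum; the minimum is attained in the paper's setting).\<close>
definition bregman_dist_sq :: "('a::real_inner \<Rightarrow> real) \<Rightarrow> 'a \<Rightarrow> 'a \<Rightarrow> 'a set \<Rightarrow> real" where
  "bregman_dist_sq f xs x C = (INF y\<in>C. bregman f xs x y)"

end

theory Submission
  imports Defs
begin

text \<open>
  Let \<open>p = P\<^sub>C x\<close>. Since \<open>p \<in> C\<close>, the Bregman distance to \<open>C\<close> is at most \<open>D(x,p)\<close>.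
  (a) The subgradient inequality at \<open>p\<close> gives \<open>D(x,p) \<le> \<langle>y\<^sup>* - x\<^sup>*, p - x\<rangle>\<close>, and
  Cauchy-Schwarz bounds this by \<open>\<parallel>x\<^sup>* - y\<^sup>*\<parallel> \<cdot> dist(x,C)\<close>.
  (b) The gradient of a differentiable convex function is a subgradient, and the descent
  lemma for \<open>L\<close>-Lipschitz gradients gives \<open>D(x,p) \<le> L/2 \<cdot> \<parallel>p - x\<parallel>\<^sup>2\<close>.
\<close>

lemma infdist_closest_point:
  assumes "closed S" "S \<noteq> {}"
  shows "infdist x S = dist x (closest_point S x)"
  using setdist_closest_point[OF assms] by (simp add: infdist_eq_setdist)

lemma bregman_nonneg:
  assumes "xs \<in> subdiff f x"
  shows "0 \<le> bregman f xs x y"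
  using assms by (auto simp: subdiff_def bregman_def algebra_simps)

lemma bregman_dist_sq_le_bregman:
  assumes "xs \<in> subdiff f x" "y \<in> C"
  shows "bregman_dist_sq f xs x C \<le> bregman f xs x y"
  unfolding bregman_dist_sq_def
  by (rule cINF_lower[OF _ assms(2)]) (use bregman_nonneg[OF assms(1)] in \<open>auto intro: bdd_belowI[of _ 0]\<close>)

lemma bregman_le_subgradient_gap:
  assumes "xs \<in> subdiff f x" "ys \<in> subdiff f y"
  shows "bregman f xs x y \<le> norm (xs - ys) * norm (y - x)"
proof -
  have "f x \<ge> f y + ys \<bullet> (x - y)"
    using assms(2) by (simp add: subdiff_def)
  then have "bregman f xs x y \<le> (ys - xs) \<bullet> (y - x)"
    by (simp add: bregman_def inner_diff_left inner_diff_right algebra_simps)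
  also have "\<dots> \<le> norm (ys - xs) * norm (y - x)"
    by (rule norm_cauchy_schwarz)
  finally show ?thesis
    by (simp add: norm_minus_commute)
qed

lemma convex_on_line:
  assumes "convex_on UNIV f"
  shows "convex_on UNIV (\<lambda>t::real. f (x + t *\<^sub>R d))"
proof (rule convex_onI)
  fix t u v :: real
  assume t: "0 < t" "t < 1"
  have "x + ((1 - t) * u + t * v) *\<^sub>R d = (1 - t) *\<^sub>R (x + u *\<^sub>R d) + t *\<^sub>R (x + v *\<^sub>R d)"
    by (simp add: algebra_simps)
  then show "f (x + ((1 - t) *\<^sub>R u + t *\<^sub>R v) *\<^sub>R d)
      \<le> (1 - t) * f (x + u *\<^sub>R d) + t * f (x + v *\<^sub>R d)"
    using convex_onD[OF assms, of t "x + u *\<^sub>R d" "x + v *\<^sub>R d"] t by simp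
qed simp

lemma has_field_derivative_along_line:
  fixes f :: "'a::real_inner \<Rightarrow> real"
  assumes "\<And>z. (f has_derivative (\<lambda>h. g z \<bullet> h)) (at z)"
  shows "((\<lambda>t. f (x + t *\<^sub>R d)) has_field_derivative g (x + t *\<^sub>R d) \<bullet> d) (at t within S)"
proof -
  have line: "((\<lambda>t. x + t *\<^sub>R d) has_derivative (\<lambda>s. s *\<^sub>R d)) (at t within S)"
    by (auto intro!: derivative_eq_intros)
  have "((\<lambda>t. f (x + t *\<^sub>R d)) has_derivative (\<lambda>s. g (x + t *\<^sub>R d) \<bullet> (s *\<^sub>R d))) (at t within S)"
    using has_derivative_compose[OF line has_derivative_at_withinI[OF assms]] by (simp add: o_def)
  then show ?thesis
    unfolding has_field_derivative_def by (rule has_derivative_eq_rhs) (auto simp: fun_eq_iff)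
qed

lemma gradient_in_subdiff:
  fixes f :: "'a::real_inner \<Rightarrow> real"
  assumes "convex_on UNIV f" and "\<And>z. (f has_derivative (\<lambda>h. g z \<bullet> h)) (at z)"
  shows "g x \<in> subdiff f x"
proof -
  have "f x + g x \<bullet> (y - x) \<le> f y" for y
    using convex_on_imp_above_tangent[OF convex_on_line[OF assms(1)] _ _ _
        has_field_derivative_along_line[OF assms(2)], of 0 1 x "y - x"]
    by simp
  then show ?thesis
    by (simp add: subdiff_def)
qed

lemma bregman_le_lipschitz_gradient:
  fixes f :: "'a::real_inner \<Rightarrow> real"
  assumes d: "\<And>z. (f has_derivative (\<lambda>h. g z \<bullet> h)) (at z)" and L: "L-lipschitz_on UNIV g"
  shows "bregman f (g x) x y \<le> L / 2 * (norm (y - x))\<^sup>2"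
proof -
  define d where "d = y - x"
  \<comment> \<open>The Lipschitz bound makes \<open>\<phi>' \<le> 0\<close> on \<open>(0,1)\<close>, and \<open>\<phi> 1 \<le> \<phi> 0\<close> is the claim.\<close>
  define \<phi> where "\<phi> t = f (x + t *\<^sub>R d) - t * (g x \<bullet> d) - L / 2 * t\<^sup>2 * (norm d)\<^sup>2" for t
  define \<phi>' where "\<phi>' t = (g (x + t *\<^sub>R d) - g x) \<bullet> d - L * t * (norm d)\<^sup>2" for t
  have der: "(\<phi> has_field_derivative \<phi>' t) (at t)" for t
    unfolding \<phi>_def \<phi>'_def inner_diff_left
    by (rule derivative_eq_intros has_field_derivative_along_line[OF d] refl | simp)+
  have "\<phi>' t \<le> 0" if "0 < t" for t
  proof -
    have "(g (x + t *\<^sub>R d) - g x) \<bullet> d \<le> norm (g (x + t *\<^sub>R d) - g x) * norm d"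
      by (rule norm_cauchy_schwarz)
    also have "\<dots> \<le> L * norm (t *\<^sub>R d) * norm d"
      using lipschitz_onD[OF L, of "x + t *\<^sub>R d" x] by (simp add: dist_norm mult_right_mono)
    also have "\<dots> = L * t * (norm d)\<^sup>2"
      using that by (simp add: power2_eq_square)
    finally show ?thesis
      by (simp add: \<phi>'_def)
  qed
  moreover have "continuous_on {0..1} \<phi>"
    using der by (meson DERIV_continuous continuous_at_imp_continuous_on)
  ultimately have "\<phi> 1 \<le> \<phi> 0"
    using der by (intro DERIV_nonpos_imp_decreasing_open[of 0 1]) auto
  then show ?thesis
    by (simp add: \<phi>_def d_def bregman_def)
qed

theorem lemma3p3:
  fixes f :: "real^'n \<Rightarrow> real" and C :: "(real^'n) set"
  assumes "strongly_convex f"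
    and "C \<noteq> {}" and "closed C" and "convex C"
  shows "((\<forall>x xs ys. xs \<in> subdiff f x \<longrightarrow> ys \<in> subdiff f (closest_point C x) \<longrightarrow>
            bregman_dist_sq f xs x C \<le> norm (xs - ys) * infdist x C)) \<and>
         (\<forall>(g :: real^'n \<Rightarrow> real^'n) (L :: real).
           (\<forall>x. (f has_derivative (\<lambda>h. g x \<bullet> h)) (at x)) \<and> L-lipschitz_on UNIV g \<longrightarrow>
           (\<forall>x. bregman_dist_sq f (g x) x C \<le> L / 2 * (infdist x C)\<^sup>2))"
proof (intro conjI allI impI)
  fix x :: "real^'n"
  let ?p = "closest_point C x"
  have p: "?p \<in> C" and dist_C: "infdist x C = norm (?p - x)"
    using closest_point_in_set[OF assms(3,2)] infdist_closest_point[OF assms(3,2)]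
    by (auto simp: dist_norm norm_minus_commute)
  {
    fix xs ys assume "xs \<in> subdiff f x" "ys \<in> subdiff f ?p"
    then show "bregman_dist_sq f xs x C \<le> norm (xs - ys) * infdist x C"
      using bregman_dist_sq_le_bregman[OF _ p] bregman_le_subgradient_gap dist_C by fastforce
  next
    fix g :: "real^'n \<Rightarrow> real^'n" and L :: real
    assume grad: "(\<forall>x. (f has_derivative (\<lambda>h. g x \<bullet> h)) (at x)) \<and> L-lipschitz_on UNIV g"
    have "convex_on UNIV f"
      using assms(1) by (auto simp: strongly_convex_def strongly_convex_with_def)
    then have "g x \<in> subdiff f x"
      using gradient_in_subdiff grad by blast
    then show "bregman_dist_sq f (g x) x C \<le> L / 2 * (infdist x C)\<^sup>2"
      using bregman_dist_sq_le_bregman[OF _ p] bregman_le_lipschitz_gradient[of f g L x ?p] grad dist_C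
      by fastforce
  }
qed

end
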